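(* Let $q > 1$ be an integer. For all positive integers $n$ and $M$, $$\Pr\left(W \in C(n,q,M+1)\right) \geq \Pr\left(W' \in C(n,q,M)\right),$$ where $W$ is chosen uniformly at random from $\{x_0,\ldots,x_{q-1}\}^{M+1}$ and $W'$ is chosen uniformly at random from $\{x_0,\ldots,x_{q-1}\}^{M}$.
   Context: Fix the alphabet $\{x_0,\ldots,x_{q-1}\}$ of $q$ letters. A word $W$ is an instance of a word $V = y_0y_1\cdots y_{m-1}$ (each $y_i$ a letter) if $W = A_0A_1\cdots A_{m-1}$ with each $A_i$ a nonempty word and $A_i = A_j$ whenever $y_i = y_j$. The Zimin words are defined by $Z_0 := \varepsilon$ (the empty word) and $Z_{n+1} := Z_n z_n Z_n$ for distinct letters $z_0,z_1,\dots$. $C(n,q,M)$ denotes the set of words $W \in \{x_0,\ldots,x_{q-1}\}^M$ that are instances of $Z_n$. *)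

theory Defs
  imports Complex_Main
begin

(* Letters x_0,...,x_{q-1} are represented by the naturals 0,...,q-1; words are lists. *)

definition is_instance :: "'a list \<Rightarrow> 'b list \<Rightarrow> bool" where
  "is_instance W V \<longleftrightarrow>
     (\<exists>As :: 'a list list. length As = length V \<and> (\<forall>A\<in>set As. A \<noteq> []) \<and>
        concat As = W \<and>
        (\<forall>i<length V. \<forall>j<length V. V ! i = V ! j \<longrightarrow> As ! i = As ! j))"

(* Zimin words, over the letters z_i represented by the natural i. *)
fun zimin :: "nat \<Rightarrow> nat list" where
  "zimin 0 = []"
| "zimin (Suc n) = zimin n @ [n] @ zimin n"

definition C :: "nat \<Rightarrow> nat \<Rightarrow> nat \<Rightarrow> nat list set" where
  "C n q M = {W. length W = M \<and> set W \<subseteq> {..<q} \<and> is_instance W (zimin n)}"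

definition words :: "nat \<Rightarrow> nat \<Rightarrow> nat list set" where
  "words q M = {W. length W = M \<and> set W \<subseteq> {..<q}}"

end

theory Submission imports Defs begin

text \<open>An instance of \<open>Z\<^sub>k\<^sub>+\<^sub>1\<close> is exactly a word \<open>X Y X\<close> with \<open>Y\<close> nonempty and \<open>X\<close> an
instance of \<open>Z\<^sub>k\<close>. Take such a factorisation of \<open>W\<close> with \<open>X\<close> as short as possible and insert
an arbitrary letter \<open>a\<close> right before the final copy of \<open>X\<close>: the result \<open>X (Y a) X\<close> is again
an instance of \<open>Z\<^sub>k\<^sub>+\<^sub>1\<close>, and its shortest such \<open>X\<close> is still the same one, since a shorter
one would survive deleting \<open>a\<close>. Hence \<open>W\<close>, and thus \<open>a\<close>, can be read off the result, so this
insertion maps \<open>C(n,q,M) \<times> {x\<^sub>0,\<dots>,x\<^sub>q\<^sub>-\<^sub>1}\<close> injectively into \<open>C(n,q,M+1)\<close>, which gives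
\<open>q |C(n,q,M)| \<le> |C(n,q,M+1)|\<close>.\<close>

lemma set_zimin: "set (zimin k) = {..<k}"
  by (induction k) (auto simp: lessThan_Suc)

lemma instance_zimin_SucD:
  assumes "is_instance W (zimin (Suc k))"
  shows "\<exists>X Y. W = X @ Y @ X \<and> Y \<noteq> [] \<and> is_instance X (zimin k)"
proof -
  let ?V = "zimin k" and ?L = "length (zimin k)"
  obtain As where len: "length As = length (zimin (Suc k))" and ne: "\<forall>A\<in>set As. A \<noteq> []"
    and cc: "concat As = W" and eq: "\<forall>i<length (zimin (Suc k)). \<forall>j<length (zimin (Suc k)).
        zimin (Suc k) ! i = zimin (Suc k) ! j \<longrightarrow> As ! i = As ! j"
    using assms unfolding is_instance_def by blast
  have lenA: "length As = 2 * ?L + 1" using len by simp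
  define As1 As2 where "As1 = take ?L As" and "As2 = drop (Suc ?L) As"
  have split: "As = As1 @ [As ! ?L] @ As2"
    unfolding As1_def As2_def using lenA id_take_nth_drop[of ?L As] by simp
  have len1: "length As1 = ?L" and len2: "length As2 = ?L"
    using lenA unfolding As1_def As2_def by auto
  have nth1: "As ! i = As1 ! i \<and> zimin (Suc k) ! i = ?V ! i" if "i < ?L" for i
    using that len1 by (subst split) (simp add: nth_append)
  have nth2: "As ! (Suc ?L + i) = As2 ! i \<and> zimin (Suc k) ! (Suc ?L + i) = ?V ! i" for i
    using len1 by (subst split) (simp add: nth_append)
  have "As1 = As2"
  proof (rule nth_equalityI)
    fix i assume "i < length As1"
    then show "As1 ! i = As2 ! i"
      using eq[rule_format, of i "Suc ?L + i"] nth1[of i] nth2[of i] len1 by simp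
  qed (simp add: len1 len2)
  have "is_instance (concat As1) ?V"
    unfolding is_instance_def
  proof (intro exI[of _ As1] conjI allI impI)
    show "\<forall>A\<in>set As1. A \<noteq> []" using ne set_take_subset[of ?L As] unfolding As1_def by blast
    fix i j assume "i < length ?V" "j < length ?V" "?V ! i = ?V ! j"
    then show "As1 ! i = As1 ! j" using eq[rule_format, of i j] nth1[of i] nth1[of j] by simp
  qed (simp_all add: len1)
  moreover have "W = concat As1 @ As ! ?L @ concat As1"
    using cc by (subst (asm) split) (simp add: \<open>As1 = As2\<close>)
  moreover have "As ! ?L \<noteq> []" using ne lenA by simp
  ultimately show ?thesis by blast
qed

lemma instance_zimin_SucI:
  assumes "Y \<noteq> []" and "is_instance X (zimin k)"
  shows "is_instance (X @ Y @ X) (zimin (Suc k))"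
proof -
  let ?V = "zimin k" and ?L = "length (zimin k)"
  obtain As where len: "length As = ?L" and ne: "\<forall>A\<in>set As. A \<noteq> []"
    and cc: "concat As = X" and eq: "\<forall>i<?L. \<forall>j<?L. ?V ! i = ?V ! j \<longrightarrow> As ! i = As ! j"
    using assms(2) unfolding is_instance_def by blast
  define g where "g i = (if i < ?L then i else i - Suc ?L)" for i
  have outer: "zimin (Suc k) ! i = ?V ! g i \<and> (As @ [Y] @ As) ! i = As ! g i \<and> g i < ?L"
    if "i < 2 * ?L + 1" "i \<noteq> ?L" for i
    using that len unfolding g_def by (auto simp: nth_append)
  have middle: "zimin (Suc k) ! ?L = k" by (simp add: nth_append)
  have outer_ne_middle: "zimin (Suc k) ! i \<noteq> k" if "i < 2 * ?L + 1" "i \<noteq> ?L" for i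
    using outer[OF that] nth_mem[of "g i" ?V] set_zimin by fastforce
  show ?thesis unfolding is_instance_def
  proof (intro exI[of _ "As @ [Y] @ As"] conjI allI impI)
    fix i j assume "i < length (zimin (Suc k))" "j < length (zimin (Suc k))"
      and ij: "zimin (Suc k) ! i = zimin (Suc k) ! j"
    then have i: "i < 2 * ?L + 1" and j: "j < 2 * ?L + 1" by auto
    show "(As @ [Y] @ As) ! i = (As @ [Y] @ As) ! j"
    proof (cases "i = ?L \<or> j = ?L")
      case True
      moreover have "i = ?L \<longleftrightarrow> j = ?L"
        using ij middle outer_ne_middle[OF i] outer_ne_middle[OF j] by metis
      ultimately have "i = j" by auto
      then show ?thesis by simp
    next
      case False
      then show ?thesis using outer[OF i] outer[OF j] ij eq by auto
    qed
  qed (use len ne cc assms(1) in auto)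
qed

lemma delete_inside_middle:
  assumes "U @ a # V = X @ Y @ Z" and "length X \<le> length U" and "length Z \<le> length V"
  shows "\<exists>Y'. U @ V = X @ Y' @ Z \<and> length Y' + 1 = length Y"
proof -
  obtain U' where U: "U = X @ U'"
    using assms(1,2) by (metis append_eq_append_conv_if append_eq_conv_conj)
  then have "U' @ a # V = Y @ Z" using assms(1) by simp
  then obtain V' where "V = V' @ Z" and "Y = U' @ a # V'"
    using assms(3) by (auto simp: append_eq_append_conv2 Cons_eq_append_conv)
  then show ?thesis using U by (intro exI[of _ "U' @ V'"]) simp
qed

definition zimin_border :: "nat \<Rightarrow> 'a list \<Rightarrow> nat \<Rightarrow> bool" where
  "zimin_border k W l \<longleftrightarrow>
     (\<exists>X Y. W = X @ Y @ X \<and> Y \<noteq> [] \<and> is_instance X (zimin k) \<and> length X = l)"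

definition min_zimin_border :: "nat \<Rightarrow> 'a list \<Rightarrow> nat" where
  "min_zimin_border k W = (LEAST l. zimin_border k W l)"

definition insert_before_border :: "nat \<Rightarrow> 'a list \<Rightarrow> 'a \<Rightarrow> 'a list" where
  "insert_before_border k W a =
     (let p = length W - min_zimin_border k W in take p W @ a # drop p W)"

lemma min_zimin_border_le: "zimin_border k W l \<Longrightarrow> min_zimin_border k W \<le> l"
  unfolding min_zimin_border_def by (rule Least_le)

lemma zimin_border_min:
  assumes "is_instance W (zimin (Suc k))"
  shows "zimin_border k W (min_zimin_border k W)"
  unfolding min_zimin_border_def
  by (rule LeastI_ex) (use instance_zimin_SucD[OF assms] in \<open>auto simp: zimin_border_def\<close>)

lemma length_insert_before_border: "length (insert_before_border k W a) = Suc (length W)"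
  by (simp add: insert_before_border_def Let_def)

lemma set_insert_before_border: "set (insert_before_border k W a) = insert a (set W)"
proof -
  have "set W = set (take p W) \<union> set (drop p W)" for p
    by (metis append_take_drop_id set_append)
  then show ?thesis by (auto simp: insert_before_border_def Let_def)
qed

lemma insert_before_min_border:
  assumes "is_instance W (zimin (Suc k))"
  obtains X Y where "W = X @ Y @ X" "Y \<noteq> []" "is_instance X (zimin k)"
    "length X = min_zimin_border k W" "insert_before_border k W a = X @ (Y @ [a]) @ X"
proof -
  obtain X Y where W: "W = X @ Y @ X" "Y \<noteq> []" "is_instance X (zimin k)"
    and lX: "length X = min_zimin_border k W"
    using zimin_border_min[OF assms] unfolding zimin_border_def by blast
  then have "insert_before_border k W a = X @ (Y @ [a]) @ X"
    by (simp add: insert_before_border_def Let_def)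
  with W lX that show ?thesis by blast
qed

lemma instance_insert_before_border:
  assumes "is_instance W (zimin (Suc k))"
  shows "is_instance (insert_before_border k W a) (zimin (Suc k))"
proof -
  obtain X Y where "Y \<noteq> []" "is_instance X (zimin k)"
    "insert_before_border k W a = X @ (Y @ [a]) @ X"
    using insert_before_min_border[OF assms] by metis
  then show ?thesis using instance_zimin_SucI[of "Y @ [a]" X k] by simp
qed

lemma min_zimin_border_insert:
  assumes "is_instance W (zimin (Suc k))"
  shows "min_zimin_border k (insert_before_border k W a) = min_zimin_border k W"
proof -
  obtain X Y where W: "W = X @ Y @ X" and Y: "Y \<noteq> []" and X: "is_instance X (zimin k)"
    and lX: "length X = min_zimin_border k W" and ins: "insert_before_border k W a = X @ (Y @ [a]) @ X"
    using insert_before_min_border[OF assms] .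
  have "zimin_border k (insert_before_border k W a) (min_zimin_border k W)"
    unfolding zimin_border_def ins using X lX by blast
  then have le: "min_zimin_border k (insert_before_border k W a) \<le> min_zimin_border k W"
    by (rule min_zimin_border_le)
  have "\<not> min_zimin_border k (insert_before_border k W a) < min_zimin_border k W"
  proof
    assume lt: "min_zimin_border k (insert_before_border k W a) < min_zimin_border k W"
    obtain X' Y' where ins': "insert_before_border k W a = X' @ Y' @ X'"
      and X': "is_instance X' (zimin k)" and lX': "length X' < length X"
      using zimin_border_min[OF instance_insert_before_border[where a = a, OF assms]] lt lX
      unfolding zimin_border_def by auto
    \<comment> \<open>Deleting the inserted letter from \<open>X' Y' X'\<close> shortens only \<open>Y'\<close>, and \<open>Y'\<close> is longer than
        \<open>Y a\<close>, so the shorter border \<open>X'\<close> would already have been one of \<open>W\<close>.\<close>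
    have "(X @ Y) @ a # X = X' @ Y' @ X'" using ins ins' by simp
    then obtain Y'' where "W = X' @ Y'' @ X'" and "length Y'' + 1 = length Y'"
      using delete_inside_middle[of "X @ Y" a X X' Y' X'] lX' W by auto
    moreover have "length Y' \<ge> 2"
      using arg_cong[OF ins', of length] ins lX' Y by (cases Y) auto
    ultimately have "zimin_border k W (length X')"
      unfolding zimin_border_def using X' by fastforce
    then show False using min_zimin_border_le lX lX' by fastforce
  qed
  with le show ?thesis by simp
qed

lemma insert_before_border_inject:
  assumes W: "is_instance W (zimin (Suc k))" and V: "is_instance V (zimin (Suc k))"
    and lens: "length W = length V"
    and eq: "insert_before_border k W a = insert_before_border k V b"
  shows "W = V \<and> a = b"
proof -
  have "min_zimin_border k W = min_zimin_border k V"
    using min_zimin_border_insert[OF W, of a] min_zimin_border_insert[OF V, of b] eq by simp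
  then obtain p where "take p W @ a # drop p W = take p V @ b # drop p V" and "p \<le> length W"
    using eq lens by (auto simp: insert_before_border_def Let_def)
  then have "take p W = take p V \<and> a = b \<and> drop p W = drop p V"
    using lens by (subst (asm) append_eq_append_conv) auto
  then show ?thesis by (metis append_take_drop_id)
qed

lemma card_words: "card (words q m) = q ^ m"
proof -
  have "words q m = {xs. set xs \<subseteq> {..<q} \<and> length xs = m}" by (auto simp: words_def)
  then show ?thesis using card_lists_length_eq[of "{..<q}" m] by simp
qed

lemma finite_C: "finite (C n q m)"
  using finite_lists_length_eq[of "{..<q}" m]
  by (rule rev_finite_subset) (auto simp: C_def)

lemma card_C_Suc_length:
  "card (C (Suc k) q M) * q \<le> card (C (Suc k) q (Suc M))"
proof -
  let ?f = "\<lambda>(W, a). insert_before_border k W a"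
  have C: "W \<in> C (Suc k) q m \<longleftrightarrow>
      length W = m \<and> set W \<subseteq> {..<q} \<and> is_instance W (zimin (Suc k))" for W m
    unfolding C_def by blast
  have "inj_on ?f (C (Suc k) q M \<times> {..<q})"
    by (rule inj_onI) (clarsimp simp only: C split_paired_all prod.case SigmaE,
        metis insert_before_border_inject)
  moreover have "?f ` (C (Suc k) q M \<times> {..<q}) \<subseteq> C (Suc k) q (Suc M)"
    by (auto simp only: C length_insert_before_border set_insert_before_border
        instance_insert_before_border)
  ultimately have "card (C (Suc k) q M \<times> {..<q}) \<le> card (C (Suc k) q (Suc M))"
    by (rule card_inj_on_le) (rule finite_C)
  then show ?thesis by (simp add: card_cartesian_product)
qed

theorem mainTheorem4:
  fixes q n M :: nat
  assumes "q > 1" and "n > 0" and "M > 0"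
  shows "real (card (C n q (M + 1))) / real (card (words q (M + 1)))
           \<ge> real (card (C n q M)) / real (card (words q M))"
proof -
  obtain k where n: "n = Suc k" using assms(2) gr0_implies_Suc by blast
  have q: "real q > 0" using assms(1) by simp
  have "real (card (C n q M)) / real q ^ M = real (card (C n q M) * q) / real q ^ Suc M"
    using q by simp
  also have "\<dots> \<le> real (card (C n q (Suc M))) / real q ^ Suc M"
    using card_C_Suc_length[of k q M] n
    by (intro divide_right_mono) (simp_all only: of_nat_le_iff of_nat_0_le_iff zero_le_power)
  finally show ?thesis by (simp add: card_words)
qed

end
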